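(* The distributive $\lambda$-calculus is confluent: for all terms $t,s_1,s_2$, if $t\to_{\mathsf{dist}}^* s_1$ and $t\to_{\mathsf{dist}}^* s_2$, then there exists a term $u$ such that $s_1\to_{\mathsf{dist}}^* u$ and $s_2\to_{\mathsf{dist}}^* u$.
   Context: Terms of the distributive $\lambda$-calculus are given by the grammar $t,s,u ::= x \mid \lambda x.t \mid ts \mid \langle t,s\rangle \mid \pi_1 t \mid \pi_2 t$, considered up to $\alpha$-renaming; $t\{x:=s\}$ denotes capture-avoiding substitution. The top-level rules are: $(\lambda x.t)s \mapsto_\beta t\{x:=s\}$; $\pi_i\langle t_1,t_2\rangle \mapsto_{\pi_i} t_i$ for $i=1,2$; $\langle t,s\rangle u \mapsto_{@_\times} \langle tu, su\rangle$; $\pi_i(\lambda x.t)\mapsto_{\pi_\lambda} \lambda x.\pi_i t$ for $i=1,2$. The relation $\to_{\mathsf{dist}}$ is the closure of the union of these rules under all term constructors (i.e. a rule may be applied to any subterm); $\to_{\mathsf{dist}}^*$ is its reflexive-transitive closure. *)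

theory Defs
  imports Main
begin

text \<open>Terms of the distributive lambda-calculus, up to alpha-renaming,
represented with de Bruijn indices (Var n refers to the n-th enclosing binder).\<close>

datatype dterm =
    Var nat
  | Lam dterm
  | App dterm dterm
  | Pair dterm dterm
  | Proj1 dterm
  | Proj2 dterm

primrec lift :: "dterm \<Rightarrow> nat \<Rightarrow> dterm" where
  "lift (Var i) k = (if i < k then Var i else Var (Suc i))"
| "lift (Lam t) k = Lam (lift t (Suc k))"
| "lift (App t s) k = App (lift t k) (lift s k)"
| "lift (Pair t s) k = Pair (lift t k) (lift s k)"
| "lift (Proj1 t) k = Proj1 (lift t k)"
| "lift (Proj2 t) k = Proj2 (lift t k)"

text \<open>subst t s k: capture-avoiding substitution of s for index k in t,
decrementing the free indices above k (the binder is removed).\<close>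
primrec subst :: "dterm \<Rightarrow> dterm \<Rightarrow> nat \<Rightarrow> dterm" where
  "subst (Var i) s k = (if k < i then Var (i - 1) else if i = k then s else Var i)"
| "subst (Lam t) s k = Lam (subst t (lift s 0) (Suc k))"
| "subst (App t u) s k = App (subst t s k) (subst u s k)"
| "subst (Pair t u) s k = Pair (subst t s k) (subst u s k)"
| "subst (Proj1 t) s k = Proj1 (subst t s k)"
| "subst (Proj2 t) s k = Proj2 (subst t s k)"

inductive dist_step :: "dterm \<Rightarrow> dterm \<Rightarrow> bool" where
  beta:   "dist_step (App (Lam t) s) (subst t s 0)"
| pi1:    "dist_step (Proj1 (Pair t1 t2)) t1"
| pi2:    "dist_step (Proj2 (Pair t1 t2)) t2"
| app_pair: "dist_step (App (Pair t s) u) (Pair (App t u) (App s u))"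
| pi1_lam: "dist_step (Proj1 (Lam t)) (Lam (Proj1 t))"
| pi2_lam: "dist_step (Proj2 (Lam t)) (Lam (Proj2 t))"
| cong_lam:   "dist_step t t' \<Longrightarrow> dist_step (Lam t) (Lam t')"
| cong_app1:  "dist_step t t' \<Longrightarrow> dist_step (App t s) (App t' s)"
| cong_app2:  "dist_step s s' \<Longrightarrow> dist_step (App t s) (App t s')"
| cong_pair1: "dist_step t t' \<Longrightarrow> dist_step (Pair t s) (Pair t' s)"
| cong_pair2: "dist_step s s' \<Longrightarrow> dist_step (Pair t s) (Pair t s')"
| cong_proj1: "dist_step t t' \<Longrightarrow> dist_step (Proj1 t) (Proj1 t')"
| cong_proj2: "dist_step t t' \<Longrightarrow> dist_step (Proj2 t) (Proj2 t')"

abbreviation dist_steps :: "dterm \<Rightarrow> dterm \<Rightarrow> bool" where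
  "dist_steps \<equiv> dist_step\<^sup>*\<^sup>*"

end

theory Submission
  imports Defs "HOL-Library.Confluence"
begin

text \<open>The root rules have pairwise disjoint left-hand sides, and no left-hand side
contains a redex strictly inside its pattern, so the calculus is orthogonal and the method
of Tait, Martin-L\<ouml>f and Takahashi applies. Parallel reduction \<open>par\<close> lies between one
step and many steps, and the complete development \<open>complete_dev t\<close>, which contracts
every redex of \<open>t\<close> simultaneously, satisfies the triangle property
\<open>par t s \<Longrightarrow> par s (complete_dev t)\<close>. Hence \<open>par\<close> has the diamond property, so it is
confluent, and \<open>dist_step\<close> has the same reflexive-transitive closure.\<close>

lemma strong_confluentp_if_triangle:
  assumes "\<And>x y. r x y \<Longrightarrow> r y (f x)"
  shows "strong_confluentp r"
  by (rule strong_confluentpI) (use assms in blast)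

lemma rtranclp_cong:
  assumes "\<And>x y. r x y \<Longrightarrow> r (f x) (f y)" and "r\<^sup>*\<^sup>* a b"
  shows "r\<^sup>*\<^sup>* (f a) (f b)"
  using assms(2) by induction (auto intro: rtranclp.rtrancl_into_rtrancl assms(1))

lemma lift_lift:
  "i < k + 1 \<Longrightarrow> lift (lift t i) (Suc k) = lift (lift t k) i"
  by (induct t arbitrary: i k) auto

lemma lift_subst [simp]:
  "j < i + 1 \<Longrightarrow> lift (subst t s j) i = subst (lift t (i + 1)) (lift s i) j"
  by (induct t arbitrary: i j s) (simp_all add: diff_Suc lift_lift split: nat.split)

lemma lift_subst_lt:
  "i < j + 1 \<Longrightarrow> lift (subst t s j) i = subst (lift t i) (lift s i) (j + 1)"
  by (induct t arbitrary: i j s) (auto simp: lift_lift)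

lemma subst_lift [simp]: "subst (lift t k) s k = t"
  by (induct t arbitrary: k s) simp_all

lemma subst_subst:
  "i < j + 1 \<Longrightarrow>
    subst (subst t (lift v i) (Suc j)) (subst u v j) i = subst (subst t u i) v j"
  by (induct t arbitrary: i j u v)
    (simp_all add: diff_Suc lift_lift [symmetric] lift_subst_lt split: nat.split)

inductive par :: "dterm \<Rightarrow> dterm \<Rightarrow> bool" where
  par_var: "par (Var i) (Var i)"
| par_lam: "par t t' \<Longrightarrow> par (Lam t) (Lam t')"
| par_app: "par t t' \<Longrightarrow> par s s' \<Longrightarrow> par (App t s) (App t' s')"
| par_pair: "par t t' \<Longrightarrow> par s s' \<Longrightarrow> par (Pair t s) (Pair t' s')"
| par_proj1: "par t t' \<Longrightarrow> par (Proj1 t) (Proj1 t')"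
| par_proj2: "par t t' \<Longrightarrow> par (Proj2 t) (Proj2 t')"
| par_beta: "par t t' \<Longrightarrow> par s s' \<Longrightarrow> par (App (Lam t) s) (subst t' s' 0)"
| par_pi1: "par t1 t1' \<Longrightarrow> par (Proj1 (Pair t1 t2)) t1'"
| par_pi2: "par t2 t2' \<Longrightarrow> par (Proj2 (Pair t1 t2)) t2'"
| par_app_pair: "par t t' \<Longrightarrow> par s s' \<Longrightarrow> par u u' \<Longrightarrow>
    par (App (Pair t s) u) (Pair (App t' u') (App s' u'))"
| par_pi1_lam: "par t t' \<Longrightarrow> par (Proj1 (Lam t)) (Lam (Proj1 t'))"
| par_pi2_lam: "par t t' \<Longrightarrow> par (Proj2 (Lam t)) (Lam (Proj2 t'))"

inductive_cases par_LamE: "par (Lam t) u"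
inductive_cases par_PairE: "par (Pair t s) u"

lemma par_refl [simp]: "par t t"
  by (induct t) (auto intro: par.intros)

lemma par_lift: "par t t' \<Longrightarrow> par (lift t k) (lift t' k)"
proof (induct arbitrary: k rule: par.induct)
  case (par_beta t t' s s')
  then show ?case
    using par.par_beta [of "lift t (Suc k)" "lift t' (Suc k)" "lift s k" "lift s' k"] by simp
qed (auto intro: par.intros)

lemma par_subst: "par t t' \<Longrightarrow> par s s' \<Longrightarrow> par (subst t s k) (subst t' s' k)"
proof (induct arbitrary: s s' k rule: par.induct)
  case (par_beta t t' u u')
  then have "par (App (Lam (subst t (lift s 0) (Suc k))) (subst u s k))
      (subst (subst t' (lift s' 0) (Suc k)) (subst u' s' k) 0)"
    by (auto intro!: par.par_beta par_lift)
  then show ?case using subst_subst [of 0 k t' s' u'] by simp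
next
  case (par_lam t t')
  then show ?case by (auto intro!: par.par_lam par_lift)
next
  case (par_pi1_lam t t')
  then show ?case by (auto intro!: par.par_pi1_lam par_lift)
next
  case (par_pi2_lam t t')
  then show ?case by (auto intro!: par.par_pi2_lam par_lift)
qed (auto intro: par.intros)

fun complete_dev :: "dterm \<Rightarrow> dterm" where
  "complete_dev (Var i) = Var i"
| "complete_dev (Lam t) = Lam (complete_dev t)"
| "complete_dev (App (Lam t) s) = subst (complete_dev t) (complete_dev s) 0"
| "complete_dev (App (Pair t s) u) =
    Pair (App (complete_dev t) (complete_dev u)) (App (complete_dev s) (complete_dev u))"
| "complete_dev (App t s) = App (complete_dev t) (complete_dev s)"
| "complete_dev (Pair t s) = Pair (complete_dev t) (complete_dev s)"
| "complete_dev (Proj1 (Pair t1 t2)) = complete_dev t1"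
| "complete_dev (Proj1 (Lam t)) = Lam (Proj1 (complete_dev t))"
| "complete_dev (Proj1 t) = Proj1 (complete_dev t)"
| "complete_dev (Proj2 (Pair t1 t2)) = complete_dev t2"
| "complete_dev (Proj2 (Lam t)) = Lam (Proj2 (complete_dev t))"
| "complete_dev (Proj2 t) = Proj2 (complete_dev t)"

lemma par_complete_dev: "par t s \<Longrightarrow> par s (complete_dev t)"
proof (induct rule: par.induct)
  case (par_app t t' s s')
  then show ?case by (cases t) (auto elim!: par_LamE par_PairE intro: par.intros)
next
  case (par_proj1 t t')
  then show ?case by (cases t) (auto elim!: par_LamE par_PairE intro: par.intros)
next
  case (par_proj2 t t')
  then show ?case by (cases t) (auto elim!: par_LamE par_PairE intro: par.intros)
qed (auto intro: par.intros par_subst)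

lemma confluentp_par: "confluentp par"
  by (rule strong_confluentp_imp_confluentp strong_confluentp_if_triangle par_complete_dev)+

lemma dist_step_imp_par: "dist_step t s \<Longrightarrow> par t s"
  by (induct rule: dist_step.induct) (auto intro: par.intros)

lemma dist_steps_Lam: "dist_steps t t' \<Longrightarrow> dist_steps (Lam t) (Lam t')"
  by (rule rtranclp_cong [of dist_step Lam, OF dist_step.cong_lam])

lemma dist_steps_Proj1: "dist_steps t t' \<Longrightarrow> dist_steps (Proj1 t) (Proj1 t')"
  by (rule rtranclp_cong [of dist_step Proj1, OF dist_step.cong_proj1])

lemma dist_steps_Proj2: "dist_steps t t' \<Longrightarrow> dist_steps (Proj2 t) (Proj2 t')"
  by (rule rtranclp_cong [of dist_step Proj2, OF dist_step.cong_proj2])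

lemma dist_steps_App:
  assumes "dist_steps t t'" and "dist_steps s s'"
  shows "dist_steps (App t s) (App t' s')"
proof -
  have "dist_steps (App t s) (App t' s)"
    using rtranclp_cong [of dist_step "\<lambda>t. App t s", OF dist_step.cong_app1 assms(1)] .
  also have "dist_steps (App t' s) (App t' s')"
    using rtranclp_cong [of dist_step "App t'", OF dist_step.cong_app2 assms(2)] .
  finally show ?thesis .
qed

lemma dist_steps_Pair:
  assumes "dist_steps t t'" and "dist_steps s s'"
  shows "dist_steps (Pair t s) (Pair t' s')"
proof -
  have "dist_steps (Pair t s) (Pair t' s)"
    using rtranclp_cong [of dist_step "\<lambda>t. Pair t s", OF dist_step.cong_pair1 assms(1)] .
  also have "dist_steps (Pair t' s) (Pair t' s')"
    using rtranclp_cong [of dist_step "Pair t'", OF dist_step.cong_pair2 assms(2)] .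
  finally show ?thesis .
qed

lemma par_imp_dist_steps: "par t s \<Longrightarrow> dist_steps t s"
proof (induct rule: par.induct)
  case (par_beta t t' s s')
  then have "dist_steps (App (Lam t) s) (App (Lam t') s')"
    by (simp add: dist_steps_App dist_steps_Lam)
  then show ?case by (rule rtranclp.rtrancl_into_rtrancl) (rule dist_step.beta)
qed (auto intro: converse_rtranclp_into_rtranclp dist_step.intros
    dist_steps_Lam dist_steps_App dist_steps_Pair dist_steps_Proj1 dist_steps_Proj2)

theorem theorem1:
  assumes "dist_steps t s1" and "dist_steps t s2"
  shows "\<exists>u. dist_steps s1 u \<and> dist_steps s2 u"
proof -
  have "par\<^sup>*\<^sup>* = dist_steps"
    by (rule rtranclp_subset) (auto intro: dist_step_imp_par par_imp_dist_steps)
  then show ?thesis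
    using confluentpD [OF confluentp_par] assms by metis
qed

end
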